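(* Let $n\ge 2$, $p>n-1$, let $D\subset\mathbb{R}^n$ be a domain, let $F_1,F_2,F_3$ be sets in $D$, and put $\Gamma_{i,j}=\Gamma(F_i,F_j,D)$, $1\le i,j\le3$. Then $$M_p(\Gamma_{1,2})\ge 3^{-p}\min\Big\{M_p(\Gamma_{1,3}),\,M_p(\Gamma_{2,3}),\,\inf M_p\big(\Gamma(|\gamma_{1,3}|,|\gamma_{2,3}|,D)\big)\Big\},$$ where the infimum is taken over all rectifiable paths $\gamma_{1,3}\in\Gamma_{1,3}$ and $\gamma_{2,3}\in\Gamma_{2,3}$.
   Context: $|\gamma|$ denotes the locus (image) of a path $\gamma$. For a path family $\Gamma$, $M_p(\Gamma)=\inf\int_{\mathbb{R}^n}\rho^p\,dm$ over Borel $\rho\ge0$ with $\int_\gamma\rho\,|dx|\ge1$ for all locally rectifiable $\gamma\in\Gamma$. $\Gamma(E,F,G)$ is the family of paths $\gamma:[s,t]\to\overline{\mathbb{R}^n}$ with $\gamma(s)\in E$, $\gamma(t)\in F$, $\gamma(\tau)\in G$ for $s<\tau<t$. *)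

theory Defs
  imports "HOL-Analysis.Analysis"
begin

text \<open>A path is represented as a triple (s, t, g) with s < t, where g is
  continuous on the closed parameter interval [s,t]; values of g outside
  [s,t] are irrelevant.\<close>

definition is_path :: "real \<times> real \<times> (real \<Rightarrow> 'a::real_normed_vector) \<Rightarrow> bool" where
  "is_path c = (case c of (s, t, g) \<Rightarrow> s < t \<and> continuous_on {s..t} g)"

definition locus :: "real \<times> real \<times> (real \<Rightarrow> 'a) \<Rightarrow> 'a set" where
  "locus c = (case c of (s, t, g) \<Rightarrow> g ` {s..t})"

definition var_length :: "(real \<Rightarrow> 'a::metric_space) \<Rightarrow> real \<Rightarrow> real \<Rightarrow> ennreal" where
  "var_length g a b =
     (SUP ts \<in> {ts. sorted ts \<and> ts \<noteq> [] \<and> hd ts = a \<and> last ts = b}.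
        ennreal (\<Sum>i<length ts - 1. dist (g (ts ! i)) (g (ts ! Suc i))))"

text \<open>A path on a closed interval is locally rectifiable iff it is rectifiable.\<close>
definition rectifiable :: "real \<times> real \<times> (real \<Rightarrow> 'a::real_normed_vector) \<Rightarrow> bool" where
  "rectifiable c = (case c of (s, t, g) \<Rightarrow> is_path c \<and> var_length g s t < \<infinity>)"

definition arclen_fun :: "real \<times> real \<times> (real \<Rightarrow> 'a::metric_space) \<Rightarrow> real \<Rightarrow> real" where
  "arclen_fun c = (case c of (s, t, g) \<Rightarrow> (\<lambda>x. enn2real (var_length g s (max s (min x t)))))"

definition line_integral :: "('a::real_normed_vector \<Rightarrow> ennreal) \<Rightarrow> real \<times> real \<times> (real \<Rightarrow> 'a) \<Rightarrow> ennreal" where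
  "line_integral \<rho> c = (case c of (s, t, g) \<Rightarrow>
      (\<integral>\<^sup>+ x \<in> {s..t}. \<rho> (g x) \<partial>(interval_measure (arclen_fun c))))"

definition enn_powr :: "ennreal \<Rightarrow> real \<Rightarrow> ennreal" where
  "enn_powr x p = (if x = \<infinity> then \<infinity> else ennreal (enn2real x powr p))"

definition admissible :: "real \<Rightarrow> (real \<times> real \<times> (real \<Rightarrow> 'a::euclidean_space)) set \<Rightarrow> ('a \<Rightarrow> ennreal) \<Rightarrow> bool" where
  "admissible p \<Gamma> \<rho> = (\<rho> \<in> borel_measurable borel \<and>
      (\<forall>c\<in>\<Gamma>. rectifiable c \<longrightarrow> line_integral \<rho> c \<ge> 1))"

definition p_modulus :: "real \<Rightarrow> (real \<times> real \<times> (real \<Rightarrow> 'a::euclidean_space)) set \<Rightarrow> ennreal" where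
  "p_modulus p \<Gamma> = (INF \<rho> \<in> {\<rho>. admissible p \<Gamma> \<rho>}. \<integral>\<^sup>+ x. enn_powr (\<rho> x) p \<partial>lborel)"

definition connecting_paths :: "'a set \<Rightarrow> 'a set \<Rightarrow> 'a set \<Rightarrow> (real \<times> real \<times> (real \<Rightarrow> 'a::real_normed_vector)) set" where
  "connecting_paths E F G = {(s, t, g). is_path (s, t, g) \<and> g s \<in> E \<and> g t \<in> F \<and>
      (\<forall>\<tau>. s < \<tau> \<and> \<tau> < t \<longrightarrow> g \<tau> \<in> G)}"

end

theory Submission
  imports Defs
begin

text \<open>Let \<open>\<rho>\<close> be admissible for \<open>\<Gamma>(F1, F2, D)\<close>. If \<open>3 \<rho>\<close> is admissible for neither
  \<open>\<Gamma>(F1, F3, D)\<close> nor \<open>\<Gamma>(F2, F3, D)\<close>, there are rectifiable \<open>c1 \<in> \<Gamma>(F1, F3, D)\<close> and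
  \<open>c2 \<in> \<Gamma>(F2, F3, D)\<close> of \<open>\<rho>\<close>-length below \<open>1/3\<close>. A rectifiable path \<open>b\<close> from \<open>|c1|\<close>
  to \<open>|c2|\<close> in \<open>D\<close>, preceded by an initial piece of \<open>c1\<close> and followed by an initial piece
  of \<open>c2\<close> run backwards, is a path of \<open>\<Gamma>(F1, F2, D)\<close>; hence \<open>b\<close> has \<open>\<rho>\<close>-length at least
  \<open>1/3\<close>, i.e. \<open>3 \<rho>\<close> is admissible for \<open>\<Gamma>(|c1|, |c2|, D)\<close>. In every case the minimum is at
  most \<open>\<integral> (3 \<rho>)\<^sup>p = 3\<^sup>p \<integral> \<rho>\<^sup>p\<close>.

  The line integral is a Lebesgue--Stieltjes integral against the arc-length function, so
  concatenating paths needs its additivity on subintervals and its invariance under reflection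
  and translation of the parameter; these rest on the continuity of arc length.\<close>

section \<open>Variation of a curve\<close>

fun polygon_length :: "(real \<Rightarrow> 'a::metric_space) \<Rightarrow> real list \<Rightarrow> real" where
  "polygon_length g (x # y # ts) = dist (g x) (g y) + polygon_length g (y # ts)"
| "polygon_length g _ = 0"

definition subdivision :: "real \<Rightarrow> real \<Rightarrow> real list \<Rightarrow> bool" where
  "subdivision a b ts \<longleftrightarrow> sorted ts \<and> ts \<noteq> [] \<and> hd ts = a \<and> last ts = b"

lemma polygon_length_nonneg: "0 \<le> polygon_length g ts"
  by (induction g ts rule: polygon_length.induct) auto

lemma sum_dist_eq_polygon_length:
  "(\<Sum>i<length ts - 1. dist (g (ts ! i)) (g (ts ! Suc i))) = polygon_length g ts"
proof (induction g ts rule: polygon_length.induct)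
  case (1 g x y ts)
  have "(\<Sum>i<length (x # y # ts) - 1. dist (g ((x # y # ts) ! i)) (g ((x # y # ts) ! Suc i)))
      = dist (g x) (g y) + (\<Sum>i<length (y # ts) - 1. dist (g ((y # ts) ! i)) (g ((y # ts) ! Suc i)))"
    by (simp add: sum.lessThan_Suc_shift del: sum.lessThan_Suc)
  then show ?case using 1 by simp
qed auto

lemma var_length_eq_SUP:
  "var_length g a b = (SUP ts \<in> {ts. subdivision a b ts}. ennreal (polygon_length g ts))"
  unfolding var_length_def subdivision_def sum_dist_eq_polygon_length by simp

lemma polygon_length_le_var_length:
  "subdivision a b ts \<Longrightarrow> ennreal (polygon_length g ts) \<le> var_length g a b"
  unfolding var_length_eq_SUP by (rule SUP_upper) auto

lemma var_length_leI:
  "(\<And>ts. subdivision a b ts \<Longrightarrow> ennreal (polygon_length g ts) \<le> B) \<Longrightarrow> var_length g a b \<le> B"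
  unfolding var_length_eq_SUP by (rule SUP_least) auto

lemma polygon_length_append:
  "xs \<noteq> [] \<Longrightarrow> ys \<noteq> [] \<Longrightarrow>
    polygon_length g (xs @ ys) = polygon_length g xs + dist (g (last xs)) (g (hd ys)) + polygon_length g ys"
  by (induction g xs rule: polygon_length.induct) (auto simp: neq_Nil_conv)

lemma polygon_length_rev: "polygon_length g (rev ts) = polygon_length g ts"
proof (induction g ts rule: polygon_length.induct)
  case (1 g x y ts)
  have "polygon_length g (rev (x # y # ts)) = polygon_length g (rev (y # ts) @ [x])"
    by simp
  also have "\<dots> = polygon_length g (rev (y # ts)) + dist (g y) (g x)"
    by (subst polygon_length_append) (auto simp: last_rev)
  finally show ?case using 1 by (simp add: dist_commute)
qed auto

lemma polygon_length_map: "polygon_length g (map f ts) = polygon_length (g \<circ> f) ts"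
  by (induction "g \<circ> f" ts rule: polygon_length.induct) auto

lemma polygon_length_cong:
  "(\<And>x. x \<in> set ts \<Longrightarrow> g x = g' x) \<Longrightarrow> polygon_length g ts = polygon_length g' ts"
  by (induction g ts rule: polygon_length.induct) auto

lemma polygon_length_const: "(\<And>x. x \<in> set ts \<Longrightarrow> x = c) \<Longrightarrow> polygon_length g ts = 0"
  by (induction g ts rule: polygon_length.induct) auto

lemma sorted_hd_le: "sorted xs \<Longrightarrow> x \<in> set xs \<Longrightarrow> hd xs \<le> x"
  by (cases xs) auto

lemma sorted_le_last: "sorted xs \<Longrightarrow> x \<in> set xs \<Longrightarrow> x \<le> last xs"
  by (induction xs) (auto simp: last_in_set)

lemma subdivision_set: "subdivision a b ts \<Longrightarrow> x \<in> set ts \<Longrightarrow> x \<in> {a..b}"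
  unfolding subdivision_def using sorted_hd_le sorted_le_last by fastforce

lemma subdivision_append:
  assumes "subdivision a m xs" "subdivision m b ys"
  shows "subdivision a b (xs @ ys)"
    and "polygon_length g (xs @ ys) = polygon_length g xs + polygon_length g ys"
proof -
  have "\<forall>x\<in>set xs. \<forall>y\<in>set ys. x \<le> y"
    using assms subdivision_set by (meson atLeastAtMost_iff order.trans)
  then show "subdivision a b (xs @ ys)"
    using assms unfolding subdivision_def by (auto simp: sorted_append)
  show "polygon_length g (xs @ ys) = polygon_length g xs + polygon_length g ys"
    using assms unfolding subdivision_def by (simp add: polygon_length_append)
qed

lemma subdivision_refine:
  assumes sub: "subdivision a b ts" and am: "a \<le> m" and mb: "m \<le> b"
  obtains xs ys where "ts = xs @ ys" "subdivision a m (xs @ [m])" "subdivision m b (m # ys)"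
    "polygon_length g ts \<le> polygon_length g (xs @ [m]) + polygon_length g (m # ys)"
proof
  define xs where "xs = takeWhile (\<lambda>x. x \<le> m) ts"
  define ys where "ys = dropWhile (\<lambda>x. x \<le> m) ts"
  show ts: "ts = xs @ ys" unfolding xs_def ys_def by simp
  have sorted: "sorted xs" "sorted ys" using sub ts unfolding subdivision_def by (metis sorted_append)+
  have xs_ne: "xs \<noteq> []" using sub am unfolding subdivision_def xs_def by (cases ts) auto
  have xs_le: "\<forall>x\<in>set xs. x \<le> m" unfolding xs_def by (meson set_takeWhileD)
  have ys_gt: "\<forall>y\<in>set ys. m < y"
  proof
    fix y assume "y \<in> set ys"
    then have "hd ys \<le> y" "ys \<noteq> []" using sorted sorted_hd_le by auto
    moreover have "m < hd ys" if "ys \<noteq> []" using that hd_dropWhile unfolding ys_def by force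
    ultimately show "m < y" by simp
  qed
  show "subdivision a m (xs @ [m])"
    using sub sorted xs_ne xs_le ts unfolding subdivision_def by (auto simp: sorted_append)
  show "subdivision m b (m # ys)"
  proof (cases "ys = []")
    case True
    then have "last xs = b" using sub ts unfolding subdivision_def by simp
    then have "m = b" using xs_le xs_ne mb by (metis antisym last_in_set)
    then show ?thesis using True by (simp add: subdivision_def)
  next
    case False
    then show ?thesis using sub ts sorted ys_gt unfolding subdivision_def by (auto simp: less_imp_le)
  qed
  show "polygon_length g ts \<le> polygon_length g (xs @ [m]) + polygon_length g (m # ys)"
  proof (cases "ys = []")
    case True
    then show ?thesis using ts xs_ne by (simp add: polygon_length_append)
  next
    case False
    have "dist (g (last xs)) (g (hd ys)) \<le> dist (g (last xs)) (g m) + dist (g m) (g (hd ys))"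
      by (rule dist_triangle)
    then show ?thesis using ts xs_ne False by (cases ys) (auto simp: polygon_length_append)
  qed
qed

lemma var_length_additive:
  assumes am: "a \<le> m" and mb: "m \<le> b"
  shows "var_length g a b = var_length g a m + var_length g m b"
proof (rule antisym)
  show "var_length g a b \<le> var_length g a m + var_length g m b"
  proof (rule var_length_leI)
    fix ts assume "subdivision a b ts"
    then obtain xs ys where sub: "subdivision a m (xs @ [m])" "subdivision m b (m # ys)"
      and le: "polygon_length g ts \<le> polygon_length g (xs @ [m]) + polygon_length g (m # ys)"
      using subdivision_refine am mb by metis
    have "ennreal (polygon_length g ts)
        \<le> ennreal (polygon_length g (xs @ [m])) + ennreal (polygon_length g (m # ys))"
      using le by (simp add: polygon_length_nonneg flip: ennreal_plus)
    also have "\<dots> \<le> var_length g a m + var_length g m b"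
      using sub by (intro add_mono polygon_length_le_var_length)
    finally show "ennreal (polygon_length g ts) \<le> var_length g a m + var_length g m b" .
  qed
next
  have ne: "{ts. subdivision a m ts} \<noteq> {}" "{ts. subdivision m b ts} \<noteq> {}"
    using am mb unfolding subdivision_def by (auto intro!: exI[of _ "[_, _]"])
  have "ennreal (polygon_length g xs) + ennreal (polygon_length g ys) \<le> var_length g a b"
    if "subdivision a m xs" "subdivision m b ys" for xs ys
    using subdivision_append(2)[OF that, of g] subdivision_append(1)[OF that]
      polygon_length_le_var_length[of a b "xs @ ys" g]
    by (simp add: polygon_length_nonneg flip: ennreal_plus)
  then show "var_length g a m + var_length g m b \<le> var_length g a b"
    unfolding var_length_eq_SUP[of g a m] var_length_eq_SUP[of g m b]
      ennreal_SUP_add_left[OF ne(1), symmetric]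
    by (intro SUP_least) (simp add: ennreal_SUP_add_right[OF ne(2)] SUP_le_iff)
qed

lemma var_length_cong:
  "(\<And>x. x \<in> {a..b} \<Longrightarrow> g x = g' x) \<Longrightarrow> var_length g a b = var_length g' a b"
  unfolding var_length_eq_SUP
  by (intro SUP_cong refl arg_cong[where f = ennreal] polygon_length_cong)
    (auto dest: subdivision_set)

lemma var_length_reflect_le: "var_length (\<lambda>x. g (d - x)) a b \<le> var_length g (d - b) (d - a)"
proof (rule var_length_leI)
  fix ts assume "subdivision a b ts"
  then have "subdivision (d - b) (d - a) (rev (map ((-) d) ts))"
    unfolding subdivision_def
    by (auto simp: sorted_wrt_rev sorted_wrt_map hd_rev last_rev hd_map last_map
        elim: sorted_wrt_mono_rel[rotated])
  from polygon_length_le_var_length[OF this, of g]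
  show "ennreal (polygon_length (\<lambda>x. g (d - x)) ts) \<le> var_length g (d - b) (d - a)"
    by (simp add: polygon_length_rev polygon_length_map comp_def)
qed

lemma var_length_reflect: "var_length (\<lambda>x. g (d - x)) a b = var_length g (d - b) (d - a)"
  using var_length_reflect_le[of g d a b] var_length_reflect_le[of "\<lambda>x. g (d - x)" d "d - b" "d - a"]
  by (simp add: antisym)

lemma var_length_finite_subinterval:
  assumes "a \<le> x" "x \<le> y" "y \<le> b" "var_length g a b \<noteq> \<infinity>"
  shows "var_length g x y \<noteq> \<infinity>"
  using assms var_length_additive[of a x b g] var_length_additive[of x y b g] by simp

lemma enn2real_var_length_additive:
  assumes "a \<le> m" "m \<le> b" "var_length g a b \<noteq> \<infinity>"
  shows "enn2real (var_length g a b) = enn2real (var_length g a m) + enn2real (var_length g m b)"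
  using assms var_length_additive[of a m b g] by (simp add: enn2real_plus less_top)

lemma polygon_length_le_first_step:
  assumes sub: "subdivision a b ts" and y: "a \<le> y" "y \<le> b"
    and gap: "\<forall>z\<in>set ts. a < z \<longrightarrow> y < z"
  shows "ennreal (polygon_length g ts) \<le> ennreal (dist (g a) (g y)) + var_length g y b"
proof -
  obtain xs ys where ts: "ts = xs @ ys"
    and sub1: "subdivision a y (xs @ [y])" and sub2: "subdivision y b (y # ys)"
    and le: "polygon_length g ts \<le> polygon_length g (xs @ [y]) + polygon_length g (y # ys)"
    using subdivision_refine[OF sub y] .
  have first: "polygon_length g (xs @ [y]) = dist (g a) (g y)"
  proof (cases "xs = []")
    case True
    then show ?thesis using sub1 by (simp add: subdivision_def)
  next
    case False
    have xs_a: "x = a" if "x \<in> set xs" for x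
    proof -
      have "x \<in> {a..y}" using subdivision_set[OF sub1] that by simp
      moreover have "x \<in> set ts" using ts that by simp
      ultimately show ?thesis using gap by force
    qed
    then have "polygon_length g xs = 0" by (rule polygon_length_const)
    moreover have "last xs = a" using False xs_a by simp
    ultimately show ?thesis using False by (simp add: polygon_length_append)
  qed
  have "ennreal (polygon_length g ts) \<le> ennreal (dist (g a) (g y)) + ennreal (polygon_length g (y # ys))"
    using le first by (simp add: polygon_length_nonneg flip: ennreal_plus)
  also have "\<dots> \<le> ennreal (dist (g a) (g y)) + var_length g y b"
    using polygon_length_le_var_length[OF sub2] by (rule add_left_mono)
  finally show ?thesis .
qed

lemma var_length_approx:
  assumes ab: "a \<le> b" and fin: "var_length g a b \<noteq> \<infinity>" and e: "0 < e"
  obtains ts where "subdivision a b ts" "enn2real (var_length g a b) - e < polygon_length g ts"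
proof (cases "enn2real (var_length g a b) < e")
  case True
  have "subdivision a b [a, b]" using ab by (simp add: subdivision_def)
  moreover have "enn2real (var_length g a b) - e < 0" using True by simp
  then have "enn2real (var_length g a b) - e < polygon_length g [a, b]"
    using polygon_length_nonneg[of g "[a, b]"] by linarith
  ultimately show ?thesis by (rule that)
next
  case False
  have "ennreal (enn2real (var_length g a b) - e) < ennreal (enn2real (var_length g a b))"
    using False e by (intro ennreal_lessI) auto
  also have "\<dots> = var_length g a b" using fin by (simp add: less_top[symmetric])
  finally obtain ts where "subdivision a b ts"
    "ennreal (enn2real (var_length g a b) - e) < ennreal (polygon_length g ts)"
    by (auto simp: var_length_eq_SUP less_SUP_iff)
  with False e show ?thesis by (intro that) (auto simp: ennreal_less_iff)
qed

lemma list_gap_right: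
  fixes x :: real
  obtains x1 where "x < x1" "\<And>z. z \<in> set ts \<Longrightarrow> x < z \<Longrightarrow> x1 \<le> z"
proof
  define Z where "Z = insert (x + 1) {z \<in> set ts. x < z}"
  have Z: "finite Z" "Z \<noteq> {}" "\<forall>z\<in>Z. x < z" unfolding Z_def by auto
  then show "x < Min Z" using Min_in by blast
  show "Min Z \<le> z" if "z \<in> set ts" "x < z" for z
    using Z(1) that by (intro Min_le) (auto simp: Z_def)
qed

text \<open>Right continuity of the variation: take a subdivision of \<open>[x, b]\<close> that almost realises
  the variation; for \<open>y > x\<close> close to \<open>x\<close> and before the next subdivision point, the polygon
  through \<open>y\<close> shows that \<open>var_length g y b\<close> is almost all of \<open>var_length g x b\<close>.\<close>
lemma var_length_right_small:
  assumes cont: "continuous_on {a..b} g" and fin: "var_length g a b \<noteq> \<infinity>"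
    and x: "a \<le> x" "x \<le> b" and e: "0 < e"
  obtains \<delta> where "\<delta> > 0" "\<And>y. y \<in> {x..b} \<Longrightarrow> y < x + \<delta> \<Longrightarrow> enn2real (var_length g x y) < e"
proof -
  have fin_x: "var_length g x b \<noteq> \<infinity>"
    using var_length_finite_subinterval x fin by blast
  obtain ts where sub: "subdivision x b ts"
    and close: "enn2real (var_length g x b) - e/2 < polygon_length g ts"
    using var_length_approx[OF x(2) fin_x, of "e/2"] e by auto
  obtain x1 where x1: "x < x1" "\<And>z. z \<in> set ts \<Longrightarrow> x < z \<Longrightarrow> x1 \<le> z"
    using list_gap_right[where x = x and ts = ts] by blast
  obtain d where d: "d > 0" "\<And>y. y \<in> {a..b} \<Longrightarrow> dist y x < d \<Longrightarrow> dist (g y) (g x) < e/2"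
    using cont x e unfolding continuous_on_iff by (metis atLeastAtMost_iff half_gt_zero)
  show ?thesis
  proof (rule that[of "min d (x1 - x)"])
    show "0 < min d (x1 - x)" using d x1 by simp
    fix y assume y: "y \<in> {x..b}" "y < x + min d (x1 - x)"
    have fin_y: "var_length g y b \<noteq> \<infinity>"
      using var_length_finite_subinterval[of x y b b g] y fin_x by auto
    have "\<forall>z\<in>set ts. x < z \<longrightarrow> y < z" using x1 y by force
    then have "ennreal (polygon_length g ts) \<le> ennreal (dist (g x) (g y)) + var_length g y b"
      using polygon_length_le_first_step[OF sub] y by auto
    also have "\<dots> = ennreal (dist (g x) (g y) + enn2real (var_length g y b))"
      using fin_y by (simp add: less_top[symmetric] ennreal_plus)
    finally have "polygon_length g ts \<le> dist (g x) (g y) + enn2real (var_length g y b)"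
      by (subst (asm) ennreal_le_iff) auto
    moreover have "dist (g y) (g x) < e/2" using d y x by (auto simp: dist_real_def)
    moreover have "enn2real (var_length g x b) = enn2real (var_length g x y) + enn2real (var_length g y b)"
      using enn2real_var_length_additive y fin_x by auto
    ultimately show "enn2real (var_length g x y) < e"
      using close by (simp add: dist_commute)
  qed
qed

lemma var_length_left_small:
  assumes cont: "continuous_on {a..b} g" and fin: "var_length g a b \<noteq> \<infinity>"
    and x: "a \<le> x" "x \<le> b" and e: "0 < e"
  obtains \<delta> where "\<delta> > 0" "\<And>y. y \<in> {a..x} \<Longrightarrow> x - \<delta> < y \<Longrightarrow> enn2real (var_length g y x) < e"
proof -
  define g' where "g' = (\<lambda>x. g (0 - x))"
  have var_g': "var_length g' u v = var_length g (- v) (- u)" for u v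
    unfolding g'_def using var_length_reflect[of g 0 u v] by simp
  have "continuous_on {-b..-a} g'" unfolding g'_def
    by (rule continuous_on_compose2[OF cont]) (auto intro!: continuous_intros)
  moreover have "var_length g' (-b) (-a) \<noteq> \<infinity>" using fin var_g' by simp
  ultimately obtain \<delta> where \<delta>: "\<delta> > 0"
    "\<And>y. y \<in> {-x..-a} \<Longrightarrow> y < -x + \<delta> \<Longrightarrow> enn2real (var_length g' (-x) y) < e"
    using var_length_right_small[of "-b" "-a" g' "-x" e] x e by auto
  show ?thesis
  proof (rule that[OF \<delta>(1)])
    fix y assume "y \<in> {a..x}" "x - \<delta> < y"
    then show "enn2real (var_length g y x) < e" using \<delta>(2)[of "-y"] var_g' by simp
  qed
qed

lemma continuous_on_var_length:
  assumes cont: "continuous_on {a..b} g" and fin: "var_length g a b \<noteq> \<infinity>"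
  shows "continuous_on {a..b} (\<lambda>x. enn2real (var_length g a x))"
  unfolding continuous_on_iff
proof (intro ballI allI impI)
  fix x e :: real assume x: "x \<in> {a..b}" and e: "0 < e"
  obtain dr where dr: "dr > 0" "\<And>y. y \<in> {x..b} \<Longrightarrow> y < x + dr \<Longrightarrow> enn2real (var_length g x y) < e"
    using var_length_right_small[OF cont fin _ _ e] x by auto
  obtain dl where dl: "dl > 0" "\<And>y. y \<in> {a..x} \<Longrightarrow> x - dl < y \<Longrightarrow> enn2real (var_length g y x) < e"
    using var_length_left_small[OF cont fin _ _ e] x by auto
  have split: "enn2real (var_length g a v) = enn2real (var_length g a u) + enn2real (var_length g u v)"
    if "u \<in> {a..b}" "v \<in> {a..b}" "u \<le> v" for u v
    using that enn2real_var_length_additive[of a u v g] var_length_finite_subinterval[of a a v b g] fin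
    by auto
  show "\<exists>d>0. \<forall>y\<in>{a..b}. dist y x < d \<longrightarrow>
      dist (enn2real (var_length g a y)) (enn2real (var_length g a x)) < e"
  proof (intro exI[of _ "min dr dl"] conjI ballI impI)
    fix y assume y: "y \<in> {a..b}" and "dist y x < min dr dl"
    then have "y < x + dr" "x - dl < y" by (auto simp: dist_real_def)
    then show "dist (enn2real (var_length g a y)) (enn2real (var_length g a x)) < e"
      using x y split[of x y] split[of y x] dr(2)[of y] dl(2)[of y] enn2real_nonneg
      by (cases "x \<le> y") (auto simp: dist_real_def)
  qed (use dr dl in simp)
qed

section \<open>Lebesgue--Stieltjes measures of continuous functions\<close>

lemma continuous_at_right_of_continuous_on_UNIV:
  "continuous_on UNIV F \<Longrightarrow> continuous (at_right x) F"
  by (rule continuous_on_imp_continuous_within) auto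

lemma interval_measure_eqI:
  fixes F :: "real \<Rightarrow> real"
  assumes right_cont: "\<And>x. continuous (at_right x) F" and mono: "\<And>x y. x \<le> y \<Longrightarrow> F x \<le> F y"
    and sets: "sets M = sets borel"
    and Ioc: "\<And>x y. x \<le> y \<Longrightarrow> emeasure M {x<..y} = ennreal (F y - F x)"
  shows "interval_measure F = M"
proof (rule measure_eqI_generator_eq[where \<Omega>=UNIV and E="range (\<lambda>(a, b). {a<..b::real})"
      and A="\<lambda>i. {- real i<..real i}"])
  fix X assume "X \<in> range (\<lambda>(a, b). {a<..b::real})"
  then obtain a b where X: "X = {a<..b}" by auto
  show "emeasure (interval_measure F) X = emeasure M X"
  proof (cases "a \<le> b")
    case True
    then show ?thesis using X Ioc emeasure_interval_measure_Ioc[OF True mono right_cont] by simp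
  qed (use X in simp)
next
  show "Int_stable (range (\<lambda>(a, b). {a<..b::real}))"
  proof (rule Int_stableI)
    fix A B assume "A \<in> range (\<lambda>(a, b). {a<..b::real})" "B \<in> range (\<lambda>(a, b). {a<..b::real})"
    then obtain a b c d where "A = {a<..b}" "B = {c<..d}" by auto
    then have "A \<inter> B = {max a c<..min b d}" by auto
    then show "A \<inter> B \<in> range (\<lambda>(a, b). {a<..b::real})" by auto
  qed
  show "sets (interval_measure F) = sigma_sets UNIV (range (\<lambda>(a, b). {a<..b::real}))"
    by (simp add: borel_sigma_sets_Ioc)
  show "sets M = sigma_sets UNIV (range (\<lambda>(a, b). {a<..b::real}))"
    using sets by (simp add: borel_sigma_sets_Ioc)
  show "(\<Union>i. {- real (i::nat)<..real i}) = UNIV"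
  proof (intro set_eqI iffI)
    fix x :: real
    obtain n :: nat where "\<bar>x\<bar> < real n" using reals_Archimedean2 by blast
    then show "x \<in> (\<Union>i. {- real (i::nat)<..real i})" by (intro UN_I[of n]) auto
  qed auto
  show "emeasure (interval_measure F) {- real i<..real i} \<noteq> \<infinity>" for i :: nat
    using emeasure_interval_measure_Ioc[of "- real i" "real i" F] mono right_cont by simp
qed auto

lemma density_interval_measure_Icc:
  fixes F :: "real \<Rightarrow> real"
  assumes cont: "continuous_on UNIV F" and mono: "\<And>x y. x \<le> y \<Longrightarrow> F x \<le> F y" and ab: "a \<le> b"
  shows "density (interval_measure F) (indicator {a..b}) = interval_measure (\<lambda>x. F (max a (min x b)))"
proof (rule interval_measure_eqI[symmetric])
  have "continuous_on UNIV (\<lambda>x. F (max a (min x b)))"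
    by (rule continuous_on_compose2[OF cont]) (auto intro!: continuous_intros)
  then show "continuous (at_right x) (\<lambda>x. F (max a (min x b)))" for x
    by (rule continuous_at_right_of_continuous_on_UNIV)
  show "F (max a (min x b)) \<le> F (max a (min y b))" if "x \<le> y" for x y
    using that by (intro mono) auto
  show "sets (density (interval_measure F) (indicator {a..b})) = sets borel" by simp
  fix x y :: real assume xy: "x \<le> y"
  have "emeasure (density (interval_measure F) (indicator {a..b})) {x<..y}
      = emeasure (interval_measure F) ({a..b} \<inter> {x<..y})"
    by (rule emeasure_restricted) auto
  also have "\<dots> = ennreal (F (max a (min y b)) - F (max a (min x b)))"
  proof -
    consider "y < a \<or> b \<le> x" | "x < a" "a \<le> y" "x < b" | "a \<le> x" "x < b" by linarith
    then show ?thesis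
    proof cases
      case 1
      then have "{a..b} \<inter> {x<..y} = {}" by auto
      then show ?thesis using 1 xy ab by auto
    next
      case 2
      then have "{a..b} \<inter> {x<..y} = {a..min y b}" by auto
      then show ?thesis using 2 ab emeasure_interval_measure_Icc[of a "min y b" F] mono cont
        by (simp add: max_def)
    next
      case 3
      then have "{a..b} \<inter> {x<..y} = {x<..min y b}" by auto
      then show ?thesis
        using 3 xy emeasure_interval_measure_Ioc[of x "min y b" F] mono
          continuous_at_right_of_continuous_on_UNIV[OF cont]
        by (simp add: max_def)
    qed
  qed
  finally show "emeasure (density (interval_measure F) (indicator {a..b})) {x<..y} =
    ennreal (F (max a (min y b)) - F (max a (min x b)))" .
qed

lemma set_nn_integral_interval_measure_cong:
  fixes F G :: "real \<Rightarrow> real"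
  assumes F: "continuous_on UNIV F" "\<And>x y. x \<le> y \<Longrightarrow> F x \<le> F y"
    and G: "continuous_on UNIV G" "\<And>x y. x \<le> y \<Longrightarrow> G x \<le> G y"
    and ab: "a \<le> b" and eq: "\<And>x. x \<in> {a..b} \<Longrightarrow> F x = G x + c"
    and f: "f \<in> borel_measurable borel"
  shows "(\<integral>\<^sup>+ x \<in> {a..b}. f x \<partial>interval_measure F) = (\<integral>\<^sup>+ x \<in> {a..b}. f x \<partial>interval_measure G)"
proof -
  have set_integral: "(\<integral>\<^sup>+ x \<in> {a..b}. f x \<partial>interval_measure H)
      = (\<integral>\<^sup>+ x. f x \<partial>interval_measure (\<lambda>x. H (max a (min x b))))"
    if "continuous_on UNIV H" "\<And>x y. x \<le> y \<Longrightarrow> H x \<le> H y" for H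
  proof -
    have "(\<integral>\<^sup>+ x \<in> {a..b}. f x \<partial>interval_measure H)
        = (\<integral>\<^sup>+ x. f x \<partial>density (interval_measure H) (indicator {a..b}))"
      using f by (subst nn_integral_density) (auto simp: mult.commute)
    then show ?thesis using density_interval_measure_Icc[OF that ab] by simp
  qed
  have "interval_measure (\<lambda>x. F (max a (min x b))) = interval_measure (\<lambda>x. G (max a (min x b)) + c)"
    using eq ab by (intro arg_cong[where f = interval_measure]) auto
  also have "\<dots> = interval_measure (\<lambda>x. G (max a (min x b)))"
    unfolding interval_measure_def by simp
  finally show ?thesis using set_integral F G by simp
qed

lemma interval_measure_reflect:
  fixes F :: "real \<Rightarrow> real"
  assumes cont: "continuous_on UNIV F" and mono: "\<And>x y. x \<le> y \<Longrightarrow> F x \<le> F y"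
  shows "interval_measure (\<lambda>x. C - F (d - x)) = distr (interval_measure F) borel ((-) d)"
proof (rule interval_measure_eqI)
  have "continuous_on UNIV (\<lambda>x. C - F (d - x))"
    by (intro continuous_on_diff continuous_on_const continuous_on_compose2[OF cont])
      (auto intro!: continuous_intros)
  then show "continuous (at_right x) (\<lambda>x. C - F (d - x))" for x
    by (rule continuous_at_right_of_continuous_on_UNIV)
  show "C - F (d - x) \<le> C - F (d - y)" if "x \<le> y" for x y using that mono by simp
  show "sets (distr (interval_measure F) borel ((-) d)) = sets borel" by simp
  fix x y :: real assume xy: "x \<le> y"
  have meas: "(-) d \<in> measurable (interval_measure F) borel"
    by (simp add: measurable_cong_sets[OF sets_interval_measure refl])
  have null: "{d - x} \<in> null_sets (interval_measure F)"
    using emeasure_interval_measure_Icc[of "d - x" "d - x" F] mono cont by (simp add: null_sets_def)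
  have "emeasure (distr (interval_measure F) borel ((-) d)) {x<..y}
      = emeasure (interval_measure F) ((-) d -` {x<..y} \<inter> space (interval_measure F))"
    by (rule emeasure_distr[OF meas]) simp
  also have "(-) d -` {x<..y} \<inter> space (interval_measure F) = {d - y..<d - x}" by auto
  also have "emeasure (interval_measure F) {d - y..<d - x}
      = emeasure (interval_measure F) ({d - y..<d - x} \<union> {d - x})"
    by (rule emeasure_Un_null_set[symmetric]) (use null in auto)
  also have "{d - y..<d - x} \<union> {d - x} = {d - y..d - x}" using xy by auto
  finally show "emeasure (distr (interval_measure F) borel ((-) d)) {x<..y} =
      ennreal (C - F (d - y) - (C - F (d - x)))"
    using emeasure_interval_measure_Icc[of "d - y" "d - x" F] mono cont xy by simp
qed

section \<open>Line integrals along rectifiable curves\<close>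

text \<open>Unlike \<^const>\<open>rectifiable\<close>, this allows the degenerate interval \<open>s = t\<close>, which occurs
  for initial pieces of paths.\<close>
definition rectifiable_on :: "(real \<Rightarrow> 'a::metric_space) \<Rightarrow> real \<Rightarrow> real \<Rightarrow> bool" where
  "rectifiable_on g s t \<longleftrightarrow> s \<le> t \<and> continuous_on {s..t} g \<and> var_length g s t \<noteq> \<infinity>"

lemma rectifiable_iff_rectifiable_on: "rectifiable (s, t, g) \<longleftrightarrow> s < t \<and> rectifiable_on g s t"
  unfolding rectifiable_def is_path_def rectifiable_on_def by (auto simp: less_top)

lemma rectifiable_on_subinterval:
  "rectifiable_on g s t \<Longrightarrow> s \<le> a \<Longrightarrow> a \<le> b \<Longrightarrow> b \<le> t \<Longrightarrow> rectifiable_on g a b"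
  unfolding rectifiable_on_def using var_length_finite_subinterval[of s a b t g]
  by (auto elim: continuous_on_subset)

lemma rectifiable_on_cong:
  "rectifiable_on g s t \<Longrightarrow> (\<And>x. x \<in> {s..t} \<Longrightarrow> g x = g' x) \<Longrightarrow> rectifiable_on g' s t"
  unfolding rectifiable_on_def using var_length_cong[of s t g g'] continuous_on_cong by metis

lemma rectifiable_on_join:
  assumes "rectifiable_on g a m" "rectifiable_on g m b"
  shows "rectifiable_on g a b"
proof -
  have am: "a \<le> m" "m \<le> b" using assms unfolding rectifiable_on_def by auto
  have "continuous_on ({a..m} \<union> {m..b}) g"
    using assms unfolding rectifiable_on_def by (intro continuous_on_closed_Un) simp_all
  moreover have "{a..m} \<union> {m..b} = {a..b}" using am by auto
  moreover have "var_length g a b \<noteq> \<infinity>"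
    using assms var_length_additive[OF am, of g] unfolding rectifiable_on_def by simp
  ultimately show ?thesis using am unfolding rectifiable_on_def by simp
qed

lemma rectifiable_on_reflect:
  assumes "rectifiable_on g s t"
  shows "rectifiable_on (\<lambda>x. g (d - x)) (d - t) (d - s)"
proof -
  have "continuous_on {d - t..d - s} ((-) d)" by (intro continuous_intros)
  moreover have "(-) d ` {d - t..d - s} \<subseteq> {s..t}" by auto
  ultimately have "continuous_on {d - t..d - s} (\<lambda>x. g (d - x))"
    using assms continuous_on_compose2[of "{s..t}" g] unfolding rectifiable_on_def by blast
  then show ?thesis using assms var_length_reflect[of g d "d - t" "d - s"]
    unfolding rectifiable_on_def by simp
qed

lemma arclen_fun_eq: "arclen_fun (s, t, g) x = enn2real (var_length g s (max s (min x t)))"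
  by (simp add: arclen_fun_def)

lemma continuous_on_clamp_compose:
  fixes g :: "real \<Rightarrow> 'a::topological_space"
  assumes "continuous_on {s..t} g" "s \<le> t"
  shows "continuous_on UNIV (\<lambda>x. g (max s (min x t)))"
proof -
  have "continuous_on UNIV (\<lambda>x::real. max s (min x t))" by (intro continuous_intros)
  moreover have "(\<lambda>x. max s (min x t)) ` UNIV \<subseteq> {s..t}" using assms(2) by auto
  ultimately show ?thesis using continuous_on_compose2[OF assms(1)] by blast
qed

lemma continuous_on_arclen_fun:
  assumes "rectifiable_on g s t"
  shows "continuous_on UNIV (arclen_fun (s, t, g))"
proof -
  have "continuous_on UNIV (\<lambda>x. enn2real (var_length g s (max s (min x t))))"
    using assms continuous_on_clamp_compose[OF continuous_on_var_length[of s t g]]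
    unfolding rectifiable_on_def by blast
  then show ?thesis by (simp add: arclen_fun_eq[abs_def])
qed

lemma arclen_fun_mono:
  assumes "rectifiable_on g s t" "x \<le> y"
  shows "arclen_fun (s, t, g) x \<le> arclen_fun (s, t, g) y"
proof -
  let ?x = "max s (min x t)" and ?y = "max s (min y t)"
  have "s \<le> t" "var_length g s t \<noteq> \<infinity>" using assms unfolding rectifiable_on_def by auto
  then have "var_length g s ?y \<noteq> \<infinity>"
    using var_length_finite_subinterval[of s s ?y t g] by simp
  moreover have "s \<le> ?x" "?x \<le> ?y" using assms(2) by auto
  ultimately have "enn2real (var_length g s ?y)
      = enn2real (var_length g s ?x) + enn2real (var_length g ?x ?y)"
    by (intro enn2real_var_length_additive)
  then show ?thesis
    unfolding arclen_fun_eq using enn2real_nonneg[of "var_length g ?x ?y"] by linarith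
qed

lemma borel_measurable_clamped_path:
  assumes "rectifiable_on g s t" "\<rho> \<in> borel_measurable borel"
  shows "(\<lambda>x. \<rho> (g (max s (min x t)))) \<in> borel_measurable borel"
proof -
  have "continuous_on UNIV (\<lambda>x. g (max s (min x t)))"
    using assms continuous_on_clamp_compose[of s t g] unfolding rectifiable_on_def by blast
  then show ?thesis using assms(2) by (rule measurable_compose[OF borel_measurable_continuous_onI])
qed

text \<open>The path is only continuous on \<open>[s, t]\<close>; composing with the clamp to \<open>[s, t]\<close>
  gives a Borel integrand without changing the line integral.\<close>
lemma line_integral_clamped:
  "line_integral \<rho> (s, t, g)
    = (\<integral>\<^sup>+ x \<in> {s..t}. \<rho> (g (max s (min x t))) \<partial>interval_measure (arclen_fun (s, t, g)))"
  unfolding line_integral_def prod.case by (rule set_nn_integral_cong) auto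

lemma line_integral_cong:
  assumes "s \<le> t" "\<And>x. x \<in> {s..t} \<Longrightarrow> g x = g' x"
  shows "line_integral \<rho> (s, t, g) = line_integral \<rho> (s, t, g')"
proof -
  have "var_length g s (max s (min x t)) = var_length g' s (max s (min x t))" for x
    using assms by (intro var_length_cong) auto
  then have "arclen_fun (s, t, g) = arclen_fun (s, t, g')"
    by (simp add: arclen_fun_eq[abs_def])
  then show ?thesis
    using assms unfolding line_integral_def prod.case by (intro set_nn_integral_cong) auto
qed

lemma set_nn_integral_arclen_subinterval:
  assumes path: "rectifiable_on g s t" and ab: "s \<le> a" "a \<le> b" "b \<le> t"
    and \<rho>: "\<rho> \<in> borel_measurable borel"
  shows "(\<integral>\<^sup>+ x \<in> {a..b}. \<rho> (g (max s (min x t))) \<partial>interval_measure (arclen_fun (s, t, g)))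
    = line_integral \<rho> (a, b, g)"
proof -
  have sub: "rectifiable_on g a b" using rectifiable_on_subinterval[OF path ab] .
  have "arclen_fun (s, t, g) x = arclen_fun (a, b, g) x + enn2real (var_length g s a)"
    if "x \<in> {a..b}" for x
  proof -
    have "max s (min x t) = x" "max a (min x b) = x" using that ab by auto
    moreover have "var_length g s x \<noteq> \<infinity>"
      using path that ab var_length_finite_subinterval[of s s x t g]
      unfolding rectifiable_on_def by auto
    ultimately show ?thesis
      using enn2real_var_length_additive[of s a x g] that ab by (simp add: arclen_fun_eq)
  qed
  from set_nn_integral_interval_measure_cong[OF continuous_on_arclen_fun[OF path]
      arclen_fun_mono[OF path] continuous_on_arclen_fun[OF sub] arclen_fun_mono[OF sub]
      ab(2) this borel_measurable_clamped_path[OF path \<rho>]]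
  have "(\<integral>\<^sup>+ x \<in> {a..b}. \<rho> (g (max s (min x t))) \<partial>interval_measure (arclen_fun (s, t, g)))
      = (\<integral>\<^sup>+ x \<in> {a..b}. \<rho> (g (max s (min x t))) \<partial>interval_measure (arclen_fun (a, b, g)))" .
  also have "\<dots> = line_integral \<rho> (a, b, g)"
    unfolding line_integral_def prod.case using ab by (intro set_nn_integral_cong) auto
  finally show ?thesis .
qed

lemma line_integral_split:
  assumes path: "rectifiable_on g s t" and m: "s \<le> m" "m \<le> t" and \<rho>: "\<rho> \<in> borel_measurable borel"
  shows "line_integral \<rho> (s, t, g) = line_integral \<rho> (s, m, g) + line_integral \<rho> (m, t, g)"
proof -
  define M where "M = interval_measure (arclen_fun (s, t, g))"
  define f where "f = (\<lambda>x. \<rho> (g (max s (min x t))))"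
  have f: "f \<in> borel_measurable M"
    using borel_measurable_clamped_path[OF path \<rho>]
    by (simp add: f_def M_def measurable_cong_sets[OF sets_interval_measure refl])
  have "{m} \<in> null_sets M"
    using emeasure_interval_measure_Icc[of m m "arclen_fun (s, t, g)"]
      continuous_on_arclen_fun[OF path] arclen_fun_mono[OF path]
    by (simp add: M_def null_sets_def)
  moreover have "({m<..t} - {m..t}) \<union> ({m..t} - {m<..t}) = {m}" using m by auto
  ultimately have "(\<integral>\<^sup>+ x \<in> {m<..t}. f x \<partial>M) = (\<integral>\<^sup>+ x \<in> {m..t}. f x \<partial>M)"
    by (intro nn_integral_null_delta) (auto simp: M_def)
  moreover have "(\<integral>\<^sup>+ x \<in> {s..m} \<union> {m<..t}. f x \<partial>M)
      = (\<integral>\<^sup>+ x \<in> {s..m}. f x \<partial>M) + (\<integral>\<^sup>+ x \<in> {m<..t}. f x \<partial>M)"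
    by (rule nn_integral_disjoint_pair[OF f]) (auto simp: M_def)
  moreover have "{s..t} = {s..m} \<union> {m<..t}" using m by auto
  ultimately have "line_integral \<rho> (s, t, g) = (\<integral>\<^sup>+ x \<in> {s..m}. f x \<partial>M) + (\<integral>\<^sup>+ x \<in> {m..t}. f x \<partial>M)"
    unfolding line_integral_clamped by (simp add: M_def f_def)
  then show ?thesis
    using set_nn_integral_arclen_subinterval[OF path _ _ _ \<rho>] m by (simp add: M_def f_def)
qed

lemma line_integral_reflect:
  assumes path: "rectifiable_on g s t" and \<rho>: "\<rho> \<in> borel_measurable borel"
  shows "line_integral \<rho> (d - t, d - s, \<lambda>x. g (d - x)) = line_integral \<rho> (s, t, g)"
proof -
  define L where "L = arclen_fun (s, t, g)"
  define f where "f = (\<lambda>x. \<rho> (g (max s (min x t))))"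
  have f: "f \<in> borel_measurable borel"
    unfolding f_def using borel_measurable_clamped_path[OF path \<rho>] .
  have st: "s \<le> t" and fin: "var_length g s t \<noteq> \<infinity>" using path by (auto simp: rectifiable_on_def)
  have "arclen_fun (d - t, d - s, \<lambda>x. g (d - x)) = (\<lambda>x. enn2real (var_length g s t) - L (d - x))"
  proof
    fix x
    let ?c = "max s (min (d - x) t)"
    have "d - max (d - t) (min x (d - s)) = ?c" using st by (auto simp: max_def min_def)
    then have "arclen_fun (d - t, d - s, \<lambda>x. g (d - x)) x = enn2real (var_length g ?c t)"
      by (simp add: arclen_fun_eq var_length_reflect)
    then show "arclen_fun (d - t, d - s, \<lambda>x. g (d - x)) x = enn2real (var_length g s t) - L (d - x)"
      using enn2real_var_length_additive[of s ?c t g] st fin by (simp add: L_def arclen_fun_eq)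
  qed
  then have measure: "interval_measure (arclen_fun (d - t, d - s, \<lambda>x. g (d - x)))
      = distr (interval_measure L) borel ((-) d)"
    unfolding L_def
    by (simp add: interval_measure_reflect continuous_on_arclen_fun[OF path] arclen_fun_mono[OF path])
  have "line_integral \<rho> (d - t, d - s, \<lambda>x. g (d - x))
      = (\<integral>\<^sup>+ x \<in> {d - t..d - s}. f (d - x) \<partial>distr (interval_measure L) borel ((-) d))"
    unfolding line_integral_def prod.case measure f_def using st by (intro set_nn_integral_cong) auto
  also have "\<dots> = (\<integral>\<^sup>+ x \<in> {s..t}. f x \<partial>interval_measure L)"
    using f by (subst nn_integral_distr) (auto simp: indicator_def intro!: nn_integral_cong)
  also have "\<dots> = line_integral \<rho> (s, t, g)"
    unfolding line_integral_clamped L_def f_def ..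
  finally show ?thesis .
qed

text \<open>A translation is the composite of two reflections.\<close>
lemma line_integral_shift:
  assumes path: "rectifiable_on g s t" and \<rho>: "\<rho> \<in> borel_measurable borel"
  shows "rectifiable_on (\<lambda>x. g (x - e)) (s + e) (t + e)"
    and "line_integral \<rho> (s + e, t + e, \<lambda>x. g (x - e)) = line_integral \<rho> (s, t, g)"
proof -
  have path': "rectifiable_on (\<lambda>x. g (0 - x)) (0 - t) (0 - s)"
    by (rule rectifiable_on_reflect[OF path])
  show "rectifiable_on (\<lambda>x. g (x - e)) (s + e) (t + e)"
    using rectifiable_on_reflect[OF path', of e] by (simp add: add.commute)
  show "line_integral \<rho> (s + e, t + e, \<lambda>x. g (x - e)) = line_integral \<rho> (s, t, g)"
    using line_integral_reflect[OF path' \<rho>, of e] line_integral_reflect[OF path \<rho>, of 0]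
    by (simp add: ac_simps)
qed

lemma line_integral_cmult:
  assumes path: "rectifiable_on g s t" and \<rho>: "\<rho> \<in> borel_measurable borel"
  shows "line_integral (\<lambda>x. c * \<rho> x) (s, t, g) = c * line_integral \<rho> (s, t, g)"
proof -
  have "(\<lambda>x. \<rho> (g (max s (min x t))) * indicator {s..t} x)
      \<in> borel_measurable (interval_measure (arclen_fun (s, t, g)))"
    using borel_measurable_clamped_path[OF path \<rho>]
    by (simp add: measurable_cong_sets[OF sets_interval_measure refl])
  from nn_integral_cmult[OF this, of c] show ?thesis
    unfolding line_integral_clamped by (simp add: mult.assoc)
qed

section \<open>Concatenation of paths\<close>

lemma line_integral_initial_segment_le:
  assumes "rectifiable_on g s t" "u \<in> {s..t}" "\<rho> \<in> borel_measurable borel"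
  shows "line_integral \<rho> (s, u, g) \<le> line_integral \<rho> (s, t, g)"
  using line_integral_split[of g s t u \<rho>] assms by simp

lemma path_concatenation:
  assumes g: "rectifiable_on g a b" and h: "rectifiable_on h c d" and meet: "g b = h c"
    and \<rho>: "\<rho> \<in> borel_measurable borel"
  obtains G where "rectifiable_on G a (b + (d - c))" "G a = g a" "G (b + (d - c)) = h d"
    "G ` {a..b + (d - c)} \<subseteq> g ` {a..b} \<union> h ` {c..d}"
    "line_integral \<rho> (a, b + (d - c), G) = line_integral \<rho> (a, b, g) + line_integral \<rho> (c, d, h)"
proof -
  define e where "e = b - c"
  define G where "G = (\<lambda>x. if x \<le> b then g x else h (x - e))"
  have ab: "a \<le> b" and cd: "c \<le> d" using g h by (auto simp: rectifiable_on_def)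
  have G_g: "G x = g x" if "x \<in> {a..b}" for x
    using that by (simp add: G_def)
  have G_h: "G x = h (x - e)" if "x \<in> {b..b + (d - c)}" for x
    using that meet by (cases "x = b") (auto simp: G_def e_def)
  have ends: "c + e = b" "d + e = b + (d - c)" by (simp_all add: e_def)
  have shift_h: "rectifiable_on (\<lambda>x. h (x - e)) b (b + (d - c))"
    "line_integral \<rho> (b, b + (d - c), \<lambda>x. h (x - e)) = line_integral \<rho> (c, d, h)"
    using line_integral_shift[OF h \<rho>, of e] unfolding ends .
  have G_pieces: "rectifiable_on G a b" "rectifiable_on G b (b + (d - c))"
    using rectifiable_on_cong[OF g] rectifiable_on_cong[OF shift_h(1)] G_g G_h by auto
  have "G ` {a..b + (d - c)} \<subseteq> g ` {a..b} \<union> h ` {c..d}"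
  proof
    fix y assume "y \<in> G ` {a..b + (d - c)}"
    then obtain x where x: "x \<in> {a..b + (d - c)}" "y = G x" by auto
    show "y \<in> g ` {a..b} \<union> h ` {c..d}"
    proof (cases "x \<le> b")
      case True
      then show ?thesis using x G_g by auto
    next
      case False
      then have "x - e \<in> {c..d}" using x by (auto simp: e_def)
      then show ?thesis using x G_h False by auto
    qed
  qed
  moreover have "line_integral \<rho> (a, b + (d - c), G)
      = line_integral \<rho> (a, b, g) + line_integral \<rho> (c, d, h)"
  proof -
    have "line_integral \<rho> (a, b + (d - c), G) = line_integral \<rho> (a, b, G) + line_integral \<rho> (b, b + (d - c), G)"
      using line_integral_split[OF rectifiable_on_join[OF G_pieces] _ _ \<rho>, of b] ab cd by simp
    also have "line_integral \<rho> (a, b, G) = line_integral \<rho> (a, b, g)"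
      using G_g ab by (intro line_integral_cong) auto
    also have "line_integral \<rho> (b, b + (d - c), G) = line_integral \<rho> (c, d, h)"
      using G_h cd shift_h(2) line_integral_cong[of b "b + (d - c)" G "\<lambda>x. h (x - e)" \<rho>] by simp
    finally show ?thesis .
  qed
  ultimately show ?thesis
    using that[OF rectifiable_on_join[OF G_pieces]] G_g[of a] G_h[of "b + (d - c)"] ab cd
    by (simp add: e_def)
qed

lemma image_reflect_atLeastAtMost:
  fixes d s t :: real
  shows "(\<lambda>x. g (d - x)) ` {d - t..d - s} = g ` {s..t}"
proof -
  have "(\<lambda>x. g (d - x)) ` {d - t..d - s} = g ` (-) d ` {d - t..d - s}"
    by (rule image_image[symmetric])
  also have "(-) d ` {d - t..d - s} = {s..t}" by simp
  finally show ?thesis .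
qed

lemma three_piece_path:
  assumes g1: "rectifiable_on g1 s1 u" and h: "rectifiable_on h s t" "s < t"
    and g2: "rectifiable_on g2 s2 v" and meet: "h s = g1 u" "h t = g2 v"
    and \<rho>: "\<rho> \<in> borel_measurable borel"
  obtains T G where "s1 < T" "rectifiable_on G s1 T" "G s1 = g1 s1" "G T = g2 s2"
    "G ` {s1..T} \<subseteq> g1 ` {s1..u} \<union> h ` {s..t} \<union> g2 ` {s2..v}"
    "line_integral \<rho> (s1, T, G)
      = line_integral \<rho> (s1, u, g1) + line_integral \<rho> (s, t, h) + line_integral \<rho> (s2, v, g2)"
proof -
  obtain G1 where G1: "rectifiable_on G1 s1 (u + (t - s))" "G1 s1 = g1 s1" "G1 (u + (t - s)) = h t"
    "G1 ` {s1..u + (t - s)} \<subseteq> g1 ` {s1..u} \<union> h ` {s..t}"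
    "line_integral \<rho> (s1, u + (t - s), G1) = line_integral \<rho> (s1, u, g1) + line_integral \<rho> (s, t, h)"
    using path_concatenation[OF g1 h(1) meet(1)[symmetric] \<rho>] .
  have g2_rev: "rectifiable_on (\<lambda>x. g2 (0 - x)) (0 - v) (0 - s2)"
    using rectifiable_on_reflect[OF g2] .
  define T where "T = u + (t - s) + ((0 - s2) - (0 - v))"
  obtain G where G: "rectifiable_on G s1 T" "G s1 = g1 s1" "G T = g2 s2"
    "G ` {s1..T} \<subseteq> G1 ` {s1..u + (t - s)} \<union> (\<lambda>x. g2 (0 - x)) ` {0 - v..0 - s2}"
    "line_integral \<rho> (s1, T, G)
      = line_integral \<rho> (s1, u + (t - s), G1) + line_integral \<rho> (0 - v, 0 - s2, \<lambda>x. g2 (0 - x))"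
    using path_concatenation[OF G1(1) g2_rev _ \<rho>] G1(2,3) meet(2) unfolding T_def by auto
  show ?thesis
  proof (rule that[OF _ G(1-3)])
    show "s1 < T" using g1 g2 h(2) by (simp add: T_def rectifiable_on_def)
    show "G ` {s1..T} \<subseteq> g1 ` {s1..u} \<union> h ` {s..t} \<union> g2 ` {s2..v}"
      using G(4) G1(4) image_reflect_atLeastAtMost[of g2 0 v s2] by auto
    show "line_integral \<rho> (s1, T, G)
        = line_integral \<rho> (s1, u, g1) + line_integral \<rho> (s, t, h) + line_integral \<rho> (s2, v, g2)"
      by (simp only: G(5) G1(5) line_integral_reflect[OF g2 \<rho>, of 0])
  qed
qed

lemma connecting_pathsI:
  "s < t \<Longrightarrow> continuous_on {s..t} g \<Longrightarrow> g s \<in> E \<Longrightarrow> g t \<in> F \<Longrightarrow> g ` {s..t} \<subseteq> G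
    \<Longrightarrow> (s, t, g) \<in> connecting_paths E F G"
  by (auto simp: connecting_paths_def is_path_def)

lemma locus_connecting_path_subset:
  assumes "c \<in> connecting_paths E F D" "E \<subseteq> D" "F \<subseteq> D"
  shows "locus c \<subseteq> D"
proof
  obtain s t g where c: "c = (s, t, g)" by (cases c)
  fix y assume "y \<in> locus c"
  then obtain x where "x \<in> {s..t}" "y = g x" by (auto simp: c locus_def)
  then show "y \<in> D" using assms unfolding c connecting_paths_def
    by (cases "x = s"; cases "x = t") auto
qed

lemma bridge_line_integral_sum_ge_one:
  assumes adm: "admissible p (connecting_paths F1 F2 D) \<rho>"
    and c1: "c1 \<in> connecting_paths F1 F3 D" "rectifiable c1"
    and c2: "c2 \<in> connecting_paths F2 F3 D" "rectifiable c2"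
    and b: "b \<in> connecting_paths (locus c1) (locus c2) D" "rectifiable b"
    and F: "F1 \<subseteq> D" "F2 \<subseteq> D" "F3 \<subseteq> D"
  shows "1 \<le> line_integral \<rho> c1 + line_integral \<rho> b + line_integral \<rho> c2"
proof -
  obtain s1 t1 g1 where c1_eq: "c1 = (s1, t1, g1)" by (cases c1)
  obtain s2 t2 g2 where c2_eq: "c2 = (s2, t2, g2)" by (cases c2)
  obtain s t h where b_eq: "b = (s, t, h)" by (cases b)
  have \<rho>: "\<rho> \<in> borel_measurable borel" using adm by (simp add: admissible_def)
  have path1: "rectifiable_on g1 s1 t1" and path2: "rectifiable_on g2 s2 t2"
    and bridge: "rectifiable_on h s t" "s < t"
    using c1(2) c2(2) b(2) by (simp_all add: c1_eq c2_eq b_eq rectifiable_iff_rectifiable_on)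
  obtain u v where u: "u \<in> {s1..t1}" "h s = g1 u" and v: "v \<in> {s2..t2}" "h t = g2 v"
    using b(1) by (auto simp: b_eq c1_eq c2_eq connecting_paths_def locus_def)
  obtain T G where G: "s1 < T" "rectifiable_on G s1 T" "G s1 = g1 s1" "G T = g2 s2"
    "G ` {s1..T} \<subseteq> g1 ` {s1..u} \<union> h ` {s..t} \<union> g2 ` {s2..v}"
    "line_integral \<rho> (s1, T, G)
      = line_integral \<rho> (s1, u, g1) + line_integral \<rho> (s, t, h) + line_integral \<rho> (s2, v, g2)"
    using three_piece_path[OF rectifiable_on_subinterval[OF path1, of s1 u] bridge
        rectifiable_on_subinterval[OF path2, of s2 v] u(2) v(2) \<rho>] u(1) v(1) by auto
  have D: "g1 ` {s1..t1} \<subseteq> D" "g2 ` {s2..t2} \<subseteq> D" "h ` {s..t} \<subseteq> D"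
    using locus_connecting_path_subset[OF c1(1)] locus_connecting_path_subset[OF c2(1)]
      locus_connecting_path_subset[OF b(1)] F
    by (simp_all add: c1_eq c2_eq b_eq locus_def)
  have "g1 ` {s1..u} \<subseteq> D" "g2 ` {s2..v} \<subseteq> D" using D(1,2) u(1) v(1) by auto
  then have "G ` {s1..T} \<subseteq> D"
    by (intro order_trans[OF G(5)] Un_least D(3))
  moreover have "g1 s1 \<in> F1" "g2 s2 \<in> F2"
    using c1(1) c2(1) by (auto simp: c1_eq c2_eq connecting_paths_def)
  ultimately have "(s1, T, G) \<in> connecting_paths F1 F2 D"
    using G(1-4) by (intro connecting_pathsI) (auto simp: rectifiable_on_def)
  moreover have "rectifiable (s1, T, G)"
    using G(1,2) by (simp add: rectifiable_iff_rectifiable_on)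
  ultimately have "1 \<le> line_integral \<rho> (s1, T, G)"
    using adm by (simp add: admissible_def)
  also have "\<dots> \<le> line_integral \<rho> c1 + line_integral \<rho> b + line_integral \<rho> c2"
    unfolding G(6) c1_eq c2_eq b_eq
    using line_integral_initial_segment_le[OF path1 u(1) \<rho>] line_integral_initial_segment_le[OF path2 v(1) \<rho>]
    by (intro add_mono order_refl)
  finally show ?thesis .
qed

section \<open>Moduli\<close>

lemma p_modulus_le: "admissible p \<Gamma> \<rho> \<Longrightarrow> p_modulus p \<Gamma> \<le> (\<integral>\<^sup>+ x. enn_powr (\<rho> x) p \<partial>lborel)"
  unfolding p_modulus_def by (rule INF_lower) simp

lemma borel_measurable_enn_powr: "(\<lambda>x. enn_powr x p) \<in> borel_measurable borel"
  unfolding enn_powr_def by measurable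

lemma enn_powr_cmult:
  assumes "0 \<le> c"
  shows "enn_powr (ennreal c * x) p = ennreal (c powr p) * enn_powr x p"
proof (cases "x = \<infinity>")
  case True
  then show ?thesis using assms
    by (cases "c = 0") (auto simp: enn_powr_def ennreal_mult_top ennreal_mult_eq_top_iff)
next
  case False
  then have "enn2real (ennreal c * x) = c * enn2real x" using assms by (simp add: enn2real_mult)
  then show ?thesis using False assms
    by (simp add: enn_powr_def ennreal_mult_eq_top_iff powr_mult ennreal_mult)
qed

lemma nn_integral_enn_powr_cmult:
  assumes "\<rho> \<in> borel_measurable borel" "0 \<le> c"
  shows "(\<integral>\<^sup>+ x. enn_powr (ennreal c * \<rho> x) p \<partial>lborel)
    = ennreal (c powr p) * (\<integral>\<^sup>+ x. enn_powr (\<rho> x) p \<partial>lborel)"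
proof -
  from measurable_compose[OF assms(1) borel_measurable_enn_powr]
  have "(\<lambda>x. enn_powr (\<rho> x) p) \<in> borel_measurable lborel" by simp
  then show ?thesis using assms(2) by (simp add: enn_powr_cmult nn_integral_cmult)
qed

lemma ennreal_one_le_three_mult_middle:
  fixes a b c :: ennreal
  assumes "1 \<le> a + b + c" "3 * a < 1" "3 * c < 1"
  shows "1 \<le> 3 * b"
proof (rule ccontr)
  assume "\<not> 1 \<le> 3 * b"
  then have b: "3 * b < 1" by simp
  have "a < top" "b < top" "c < top" using assms(2,3) b
    by (auto simp: less_top[symmetric])
  then obtain x y z where xyz: "a = ennreal x" "b = ennreal y" "c = ennreal z" "0 \<le> x" "0 \<le> y" "0 \<le> z"
    by (metis enn2real_nonneg ennreal_enn2real)
  have "3 * x < 1" "3 * y < 1" "3 * z < 1" using assms b xyz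
    by (auto simp: ennreal_mult''[symmetric] ennreal_less_iff simp flip: ennreal_1 ennreal_numeral)
  moreover have "1 \<le> x + y + z" using assms(1) xyz
    by (simp flip: ennreal_plus ennreal_1)
  ultimately show False by linarith
qed

lemma admissible_three_times:
  fixes \<rho> :: "'a::euclidean_space \<Rightarrow> ennreal"
  assumes adm: "admissible p (connecting_paths F1 F2 D) \<rho>"
    and F: "F1 \<subseteq> D" "F2 \<subseteq> D" "F3 \<subseteq> D"
  shows "admissible p (connecting_paths F1 F3 D) (\<lambda>x. 3 * \<rho> x)
    \<or> admissible p (connecting_paths F2 F3 D) (\<lambda>x. 3 * \<rho> x)
    \<or> (\<exists>c1 c2. c1 \<in> connecting_paths F1 F3 D \<and> rectifiable c1 \<and>
          c2 \<in> connecting_paths F2 F3 D \<and> rectifiable c2 \<and>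
          admissible p (connecting_paths (locus c1) (locus c2) D) (\<lambda>x. 3 * \<rho> x))"
proof -
  have \<rho>: "\<rho> \<in> borel_measurable borel" using adm by (simp add: admissible_def)
  then have \<rho>3: "(\<lambda>x. 3 * \<rho> x) \<in> borel_measurable borel" by measurable
  have scale: "line_integral (\<lambda>x. 3 * \<rho> x) c = 3 * line_integral \<rho> c" if "rectifiable c" for c
    using that line_integral_cmult[OF _ \<rho>] by (cases c) (simp add: rectifiable_iff_rectifiable_on)
  show ?thesis
  proof (cases "admissible p (connecting_paths F1 F3 D) (\<lambda>x. 3 * \<rho> x)
      \<or> admissible p (connecting_paths F2 F3 D) (\<lambda>x. 3 * \<rho> x)")
    case False
    then obtain c1 c2 where c1: "c1 \<in> connecting_paths F1 F3 D" "rectifiable c1" "3 * line_integral \<rho> c1 < 1"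
      and c2: "c2 \<in> connecting_paths F2 F3 D" "rectifiable c2" "3 * line_integral \<rho> c2 < 1"
      using \<rho>3 by (auto simp: admissible_def not_le scale)
    have "admissible p (connecting_paths (locus c1) (locus c2) D) (\<lambda>x. 3 * \<rho> x)"
      unfolding admissible_def
    proof (intro conjI ballI impI \<rho>3)
      fix b assume b: "b \<in> connecting_paths (locus c1) (locus c2) D" "rectifiable b"
      have "1 \<le> line_integral \<rho> c1 + line_integral \<rho> b + line_integral \<rho> c2"
        by (rule bridge_line_integral_sum_ge_one[OF adm c1(1,2) c2(1,2) b F])
      then have "1 \<le> 3 * line_integral \<rho> b"
        using c1(3) c2(3) by (rule ennreal_one_le_three_mult_middle)
      then show "1 \<le> line_integral (\<lambda>x. 3 * \<rho> x) b" by (simp add: scale b(2))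
    qed
    then show ?thesis using c1 c2 by blast
  qed blast
qed

lemma min_moduli_le_three_times:
  fixes \<rho> :: "'a::euclidean_space \<Rightarrow> ennreal"
  assumes adm: "admissible p (connecting_paths F1 F2 D) \<rho>"
    and F: "F1 \<subseteq> D" "F2 \<subseteq> D" "F3 \<subseteq> D"
  shows "min (p_modulus p (connecting_paths F1 F3 D))
      (min (p_modulus p (connecting_paths F2 F3 D))
        (INF c \<in> {(c13, c23). c13 \<in> connecting_paths F1 F3 D \<and> rectifiable c13 \<and>
                              c23 \<in> connecting_paths F2 F3 D \<and> rectifiable c23}.
           p_modulus p (connecting_paths (locus (fst c)) (locus (snd c)) D)))
    \<le> (\<integral>\<^sup>+ x. enn_powr (3 * \<rho> x) p \<partial>lborel)"
  using admissible_three_times[OF adm F]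
proof (elim disjE exE conjE)
  assume "admissible p (connecting_paths F1 F3 D) (\<lambda>x. 3 * \<rho> x)"
  then show ?thesis by (intro min.coboundedI1 p_modulus_le)
next
  assume "admissible p (connecting_paths F2 F3 D) (\<lambda>x. 3 * \<rho> x)"
  then show ?thesis by (intro min.coboundedI2 min.coboundedI1 p_modulus_le)
next
  fix c1 c2 assume "c1 \<in> connecting_paths F1 F3 D" "rectifiable c1"
    "c2 \<in> connecting_paths F2 F3 D" "rectifiable c2"
    "admissible p (connecting_paths (locus c1) (locus c2) D) (\<lambda>x. 3 * \<rho> x)"
  then show ?thesis
    by (intro min.coboundedI2 INF_lower2[of "(c1, c2)"] p_modulus_le) auto
qed

theorem lemma2p2:
  fixes D F1 F2 F3 :: "(real ^ 'n) set" and p :: real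
  assumes "CARD('n) \<ge> 2"
    and "p > real CARD('n) - 1"
    and "open D" and "connected D" and "D \<noteq> {}"
    and "F1 \<subseteq> D" and "F2 \<subseteq> D" and "F3 \<subseteq> D"
  shows "p_modulus p (connecting_paths F1 F2 D) \<ge>
    ennreal (3 powr (- p)) *
      min (p_modulus p (connecting_paths F1 F3 D))
        (min (p_modulus p (connecting_paths F2 F3 D))
          (INF c \<in> {(c13, c23). c13 \<in> connecting_paths F1 F3 D \<and> rectifiable c13 \<and>
                                c23 \<in> connecting_paths F2 F3 D \<and> rectifiable c23}.
             p_modulus p (connecting_paths (locus (fst c)) (locus (snd c)) D)))"
    (is "_ \<ge> _ * ?m")
proof -
  have "ennreal (3 powr (- p)) * ?m \<le> (\<integral>\<^sup>+ x. enn_powr (\<rho> x) p \<partial>lborel)"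
    if adm: "admissible p (connecting_paths F1 F2 D) \<rho>" for \<rho>
  proof -
    have \<rho>: "\<rho> \<in> borel_measurable borel" using adm by (simp add: admissible_def)
    have "ennreal (3 powr (- p)) * ?m
        \<le> ennreal (3 powr (- p)) * (ennreal (3 powr p) * (\<integral>\<^sup>+ x. enn_powr (\<rho> x) p \<partial>lborel))"
      using min_moduli_le_three_times[OF adm assms(6-8)] nn_integral_enn_powr_cmult[OF \<rho>, of 3 p]
      by (simp add: mult_left_mono)
    also have "\<dots> = (\<integral>\<^sup>+ x. enn_powr (\<rho> x) p \<partial>lborel)"
      by (simp add: mult.assoc[symmetric] ennreal_mult[symmetric] powr_add[symmetric])
    finally show ?thesis .
  qed
  then show ?thesis
    unfolding p_modulus_def[of p "connecting_paths F1 F2 D"] by (intro INF_greatest) simp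
qed

end
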